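(* Let $p\ge2$ and $c>0$ be such that $N_p^c$ exists, and suppose that for every $c'\in(0,c]$ the set $N_p^{c'}$ has the star property: for every $x\in N_p^{c'}$ and every $\lambda\in[0,1)$, $\lambda x\in\mathrm{Int}(N_p^{c'})$. Then $V_p$ is radially increasing on $N_p^c$: for every $x\in N_p^c\setminus\{0\}$ and all $0\le\lambda_1<\lambda_2\le1$, $V_p(\lambda_1x)<V_p(\lambda_2 x)$.
   Context: Let $f:\mathbb{R}^n\to\mathbb{R}^n$ be real-analytic with $f(0)=0$, and assume all eigenvalues of $A=\frac{\partial f}{\partial x}(0)$ have negative real parts. $\|\cdot\|$ is the Euclidean norm. Let $V$ be the real-analytic function on a neighborhood of $0$ with $\langle\nabla V(x),f(x)\rangle=-\|x\|^2$, $V(0)=0$, and for $p\ge 2$ let $V_p$ be the Taylor polynomial of $V$ at $0$ of degree $p$ (terms of degrees $2,\dots,p$). Let $G_p$ be the maximal domain (connected open set) containing $0$ such that $V_p(x)>0$ and $\langle\nabla V_p(x),f(x)\rangle<0$ for all $x\in G_p\setminus\{0\}$. A closed connected set $S\subset\mathbb{R}^n$ is called $(p,c)$-admissible if: $0\in\mathrm{Int}(S)$; $V_p(x)<c$ for all $x\in\mathrm{Int}(S)$; $V_p(x)=c$ for all $x\in\partial S$; and $S$ is compact with $S\subset G_p$. For given $p,c$ there is at most one such set; when it exists it is denoted $N_p^c$. *)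

theory Defs
  imports "HOL-Analysis.Analysis"
begin

text \<open>Real-analyticity on a set U of the Euclidean space real^'n: around every point a of U
  the function is given by an (unconditionally, hence absolutely) convergent multivariate
  power series in the coordinates, indexed by multi-indices alpha :: 'n => nat.\<close>
definition real_analytic_on :: "(real^'n \<Rightarrow> 'b::real_normed_vector) \<Rightarrow> (real^'n) set \<Rightarrow> bool" where
  "real_analytic_on g U \<longleftrightarrow>
     (\<forall>a\<in>U. \<exists>r>0. ball a r \<subseteq> U \<and> (\<exists>co :: ('n \<Rightarrow> nat) \<Rightarrow> 'b.
        \<forall>x\<in>ball a r. ((\<lambda>\<alpha>. (\<Prod>i\<in>UNIV. (x$i - a$i) ^ \<alpha> i) *\<^sub>R co \<alpha>) has_sum g x) UNIV))"

definition cplx_eigenvalue :: "real^'n^'n \<Rightarrow> complex \<Rightarrow> bool" where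
  "cplx_eigenvalue A \<mu> \<longleftrightarrow>
     (\<exists>v :: complex^'n. v \<noteq> 0 \<and> (\<chi> i j. complex_of_real (A$i$j)) *v v = \<mu> *s v)"

text \<open>Taylor polynomial of V at 0, terms of degrees 2..p. The degree-k homogeneous term
  evaluated at x is (1/k!) d^k/dt^k V(t x) at t = 0.\<close>
definition taylor_poly :: "(real^'n \<Rightarrow> real) \<Rightarrow> nat \<Rightarrow> real^'n \<Rightarrow> real" where
  "taylor_poly V p x = (\<Sum>k=2..p. (deriv ^^ k) (\<lambda>t. V (t *\<^sub>R x)) 0 / fact k)"

definition orbital_deriv :: "(real^'n \<Rightarrow> real^'n) \<Rightarrow> (real^'n \<Rightarrow> real) \<Rightarrow> real^'n \<Rightarrow> real" where
  "orbital_deriv f W x = frechet_derivative W (at x) (f x)"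

definition Gp :: "(real^'n \<Rightarrow> real^'n) \<Rightarrow> (real^'n \<Rightarrow> real) \<Rightarrow> nat \<Rightarrow> (real^'n) set" where
  "Gp f V p = \<Union>{D. open D \<and> connected D \<and> 0 \<in> D \<and>
      (\<forall>x\<in>D - {0}. taylor_poly V p x > 0 \<and> orbital_deriv f (taylor_poly V p) x < 0)}"

definition admissible :: "(real^'n \<Rightarrow> real^'n) \<Rightarrow> (real^'n \<Rightarrow> real) \<Rightarrow> nat \<Rightarrow> real \<Rightarrow> (real^'n) set \<Rightarrow> bool" where
  "admissible f V p c S \<longleftrightarrow>
     closed S \<and> connected S \<and> 0 \<in> interior S \<and>
     (\<forall>x\<in>interior S. taylor_poly V p x < c) \<and>
     (\<forall>x\<in>frontier S. taylor_poly V p x = c) \<and>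
     compact S \<and> S \<subseteq> Gp f V p"

definition Nset :: "(real^'n \<Rightarrow> real^'n) \<Rightarrow> (real^'n \<Rightarrow> real) \<Rightarrow> nat \<Rightarrow> real \<Rightarrow> (real^'n) set" where
  "Nset f V p c = (THE S. admissible f V p c S)"

definition star_prop :: "(real^'n) set \<Rightarrow> bool" where
  "star_prop S \<longleftrightarrow> (\<forall>x\<in>S. \<forall>t\<in>{0..<1::real}. t *\<^sub>R x \<in> interior S)"

end

theory Submission
  imports Defs
begin

(* The Taylor polynomial W = V_p is a polynomial, hence C^1, and on G_p - {0} its orbital
   derivative is negative, so W has no critical point there. Hence every such point y lies in
   the closure of {W < W y}, and near it this strict sublevel set is connected (slide along a
   descent direction into a small ball below the level). These two facts make admissible sets
   unique and show that N_p^c' contains every point of N_p^c at level c' <= c. For y = l2 x and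
   c' = W y, the star property of N_p^c' then puts (l1/l2) y = l1 x into its interior, where
   W < c'. *)

lemma powser_sums_deriv:
  fixes g :: "real \<Rightarrow> real"
  assumes sums: "\<And>s. \<bar>s\<bar> < R \<Longrightarrow> (\<lambda>k. c k * s ^ k) sums g s" and t: "\<bar>t\<bar> < R"
  shows "(\<lambda>k. diffs c k * t ^ k) sums deriv g t"
proof -
  have summable: "\<And>s. norm s < R \<Longrightarrow> summable (\<lambda>k. c k * s ^ k)"
    using sums sums_summable by fastforce
  have "((\<lambda>s. \<Sum>k. c k * s ^ k) has_field_derivative (\<Sum>k. diffs c k * t ^ k)) (at t)"
    using termdiffs_strong'[OF summable] t by simp
  then have "(g has_field_derivative (\<Sum>k. diffs c k * t ^ k)) (at t)"
    by (rule has_field_derivative_transform_within_open[of _ _ _ "{-R<..<R}"])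
       (use t sums_unique[OF sums] in \<open>auto simp: abs_less_iff\<close>)
  moreover have "summable (\<lambda>k. diffs c k * t ^ k)"
    using termdiff_converges[OF _ summable] t by simp
  ultimately show ?thesis
    by (simp add: DERIV_imp_deriv summable_sums)
qed

lemma powser_higher_deriv_0:
  fixes g :: "real \<Rightarrow> real"
  assumes "\<And>s. \<bar>s\<bar> < R \<Longrightarrow> (\<lambda>k. c k * s ^ k) sums g s" and "R > 0"
  shows "(deriv ^^ n) g 0 = fact n * c n"
  using assms
proof (induction n arbitrary: g c)
  case 0
  then show ?case by (metis abs_zero funpow_0 fact_0 mult_1 powser_sums_zero_iff)
next
  case (Suc n)
  have "(deriv ^^ Suc n) g 0 = (deriv ^^ n) (deriv g) 0"
    by (simp only: funpow_Suc_right o_def)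
  also have "\<dots> = fact n * diffs c n"
  proof -
    have "\<And>s. \<bar>s\<bar> < R \<Longrightarrow> (\<lambda>k. diffs c k * s ^ k) sums deriv g s"
      using powser_sums_deriv Suc.prems(1) by blast
    then show ?thesis
      using Suc.IH Suc.prems(2) by blast
  qed
  also have "\<dots> = fact (Suc n) * c (Suc n)"
    by (simp add: diffs_def)
  finally show ?case .
qed

definition total_degree :: "('n::finite \<Rightarrow> nat) \<Rightarrow> nat" where
  "total_degree \<alpha> = (\<Sum>i\<in>UNIV. \<alpha> i)"

definition monomial :: "('n::finite \<Rightarrow> nat) \<Rightarrow> real^'n \<Rightarrow> real" where
  "monomial \<alpha> x = (\<Prod>i\<in>UNIV. x$i ^ \<alpha> i)"

definition monomial_deriv :: "('n::finite \<Rightarrow> nat) \<Rightarrow> real^'n \<Rightarrow> real^'n \<Rightarrow> real" where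
  "monomial_deriv \<alpha> x v =
     (\<Sum>j\<in>UNIV. (of_nat (\<alpha> j) * v$j * x$j ^ (\<alpha> j - 1)) * (\<Prod>i\<in>UNIV - {j}. x$i ^ \<alpha> i))"

lemma finite_total_degree_eq: "finite {\<alpha>::'n::finite \<Rightarrow> nat. total_degree \<alpha> = k}"
proof (rule finite_subset)
  show "{\<alpha>::'n \<Rightarrow> nat. total_degree \<alpha> = k} \<subseteq> PiE UNIV (\<lambda>_. {..k})"
  proof
    fix \<alpha> :: "'n \<Rightarrow> nat"
    assume "\<alpha> \<in> {\<alpha>. total_degree \<alpha> = k}"
    then have "\<alpha> i \<le> k" for i
      unfolding total_degree_def using member_le_sum[of i UNIV \<alpha>] by auto
    then show "\<alpha> \<in> PiE UNIV (\<lambda>_. {..k})"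
      by auto
  qed
qed (simp add: finite_PiE)

lemma monomial_scaleR: "monomial \<alpha> (t *\<^sub>R x) = t ^ total_degree \<alpha> * monomial \<alpha> x"
  unfolding monomial_def total_degree_def by (simp add: power_mult_distrib prod.distrib power_sum)

lemma has_derivative_monomial: "(monomial \<alpha> has_derivative monomial_deriv \<alpha> x) (at x)"
  unfolding monomial_def[abs_def] monomial_deriv_def[abs_def]
  by (intro has_derivative_prod has_derivative_power bounded_linear_imp_has_derivative
      bounded_linear_vec_nth)

lemma continuous_on_monomial_deriv: "continuous_on UNIV (\<lambda>x. monomial_deriv \<alpha> x v)"
  unfolding monomial_deriv_def by (intro continuous_intros)

lemma has_sum_group_by_total_degree:
  fixes h :: "('n::finite \<Rightarrow> nat) \<Rightarrow> 'a::{comm_monoid_add,uniform_space,uniform_topological_group_add}"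
  assumes "(h has_sum s) UNIV"
  shows "((\<lambda>k. \<Sum>\<alpha> | total_degree \<alpha> = k. h \<alpha>) has_sum s) UNIV"
proof -
  let ?A = "SIGMA k:UNIV. {\<alpha>::'n \<Rightarrow> nat. total_degree \<alpha> = k}"
  have "inj_on snd ?A" "snd ` ?A = UNIV"
    by (auto simp: inj_on_def image_iff)
  then have "((\<lambda>(k, \<alpha>). h \<alpha>) has_sum s) ?A"
    using has_sum_reindex[of snd ?A h s] assms by (simp add: case_prod_beta' o_def)
  then show ?thesis
    by (rule has_sum_Sigma') (auto intro: has_sum_finiteI finite_total_degree_eq)
qed

lemma taylor_poly_powser:
  fixes V :: "real^'n \<Rightarrow> real"
  assumes "r > 0" and V: "\<And>x. x \<in> ball 0 r \<Longrightarrow> ((\<lambda>\<alpha>. co \<alpha> * monomial \<alpha> x) has_sum V x) UNIV"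
  shows "taylor_poly V p x = (\<Sum>k=2..p. \<Sum>\<alpha> | total_degree \<alpha> = k. co \<alpha> * monomial \<alpha> x)"
proof -
  define b where "b k = (\<Sum>\<alpha> | total_degree \<alpha> = k. co \<alpha> * monomial \<alpha> x)" for k
  define R where "R = r / (norm x + 1)"
  have R: "R > 0"
    using \<open>r > 0\<close> by (simp add: R_def add_nonneg_pos)
  have line: "(\<lambda>k. b k * t ^ k) sums V (t *\<^sub>R x)" if t: "\<bar>t\<bar> < R" for t
  proof -
    have "norm (t *\<^sub>R x) \<le> \<bar>t\<bar> * (norm x + 1)"
      by (simp add: mult_left_mono)
    also have "\<dots> < r"
      using t by (simp add: R_def pos_less_divide_eq add_nonneg_pos)
    finally have "((\<lambda>\<alpha>. co \<alpha> * monomial \<alpha> (t *\<^sub>R x)) has_sum V (t *\<^sub>R x)) UNIV"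
      using V by simp
    from has_sum_group_by_total_degree[OF this]
    show ?thesis
      by (simp add: has_sum_imp_sums b_def monomial_scaleR sum_distrib_left mult_ac)
  qed
  have "(deriv ^^ k) (\<lambda>t. V (t *\<^sub>R x)) 0 = fact k * b k" for k
    using powser_higher_deriv_0[where c = b and g = "\<lambda>t. V (t *\<^sub>R x)", OF line R] .
  then show ?thesis
    unfolding taylor_poly_def b_def by simp
qed

lemma taylor_poly_continuously_differentiable:
  fixes V :: "real^'n \<Rightarrow> real"
  assumes "real_analytic_on V U" "0 \<in> U"
  obtains dW where "\<And>x. (taylor_poly V p has_derivative dW x) (at x)"
    "\<And>v. continuous_on UNIV (\<lambda>x. dW x v)"
proof -
  obtain r co where "r > 0" and V_powser:
    "\<forall>x\<in>ball 0 r. ((\<lambda>\<alpha>. (\<Prod>i\<in>UNIV. (x$i - (0::real^'n)$i) ^ \<alpha> i) *\<^sub>R co \<alpha>) has_sum V x) UNIV"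
    using assms unfolding real_analytic_on_def by blast
  have W_eq: "taylor_poly V p = (\<lambda>x. \<Sum>k=2..p. \<Sum>\<alpha> | total_degree \<alpha> = k. co \<alpha> * monomial \<alpha> x)"
  proof
    fix x
    show "taylor_poly V p x = (\<Sum>k=2..p. \<Sum>\<alpha> | total_degree \<alpha> = k. co \<alpha> * monomial \<alpha> x)"
      by (rule taylor_poly_powser[OF \<open>r > 0\<close>]) (use V_powser in \<open>simp add: monomial_def mult.commute\<close>)
  qed
  show ?thesis
  proof (rule that)
    show "(taylor_poly V p has_derivative
        (\<lambda>v. \<Sum>k=2..p. \<Sum>\<alpha> | total_degree \<alpha> = k. co \<alpha> * monomial_deriv \<alpha> x v)) (at x)" for x
      unfolding W_eq by (intro has_derivative_sum has_derivative_mult_right has_derivative_monomial)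
    show "continuous_on UNIV (\<lambda>x. \<Sum>k=2..p. \<Sum>\<alpha> | total_degree \<alpha> = k. co \<alpha> * monomial_deriv \<alpha> x v)"
      for v
      by (intro continuous_on_sum continuous_on_mult continuous_on_const continuous_on_monomial_deriv)
  qed
qed

lemma connected_sublevel_subset_interior:
  fixes W :: "'a::topological_space \<Rightarrow> 'b::preorder"
  assumes level: "\<forall>x\<in>frontier S. W x = c" and "connected M" "M \<inter> S \<noteq> {}"
    and below: "\<forall>x\<in>M. W x < c"
  shows "M \<subseteq> interior S"
proof -
  have disjoint: "M \<inter> frontier S = {}"
    using level below by fastforce
  then have "M \<subseteq> S"
    using connected_Int_frontier[OF \<open>connected M\<close> \<open>M \<inter> S \<noteq> {}\<close>] by blast
  with disjoint show ?thesis
    using closure_subset[of S] by (auto simp: frontier_def)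
qed

locale C1_noncritical =
  fixes W :: "'a::euclidean_space \<Rightarrow> real" and dW :: "'a \<Rightarrow> 'a \<Rightarrow> real" and G :: "'a set"
  assumes has_derivative_W: "\<And>x. (W has_derivative dW x) (at x)"
    and continuous_dW: "\<And>v. continuous_on UNIV (\<lambda>x. dW x v)"
    and descent_direction: "\<And>y. y \<in> G \<Longrightarrow> y \<noteq> 0 \<Longrightarrow> \<exists>v. dW y v < 0"
begin

lemma continuous_on_W: "continuous_on S W"
  by (meson has_derivative_W continuous_at_imp_continuous_on has_derivative_continuous)

lemma linear_dW: "linear (dW x)"
  using has_derivative_W has_derivative_linear by blast

lemma open_strict_sublevel: "open {x. W x < c}"
  by (rule open_Collect_less) (auto intro: continuous_on_W)

lemma mem_closure_strict_sublevel:
  assumes "y \<in> G" "y \<noteq> 0"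
  shows "y \<in> closure {x. W x < W y}"
proof (rule ccontr)
  assume "y \<notin> closure {x. W x < W y}"
  then obtain e where "e > 0" and min: "\<forall>x\<in>ball y e. W y \<le> W x"
    unfolding closure_approachable by (force simp: dist_commute not_less)
  have "dW y = (\<lambda>v. 0)"
    by (rule differential_zero_maxmin[of y "ball y e" W "dW y"]) (use \<open>e > 0\<close> min has_derivative_W in auto)
  then show False
    using descent_direction[OF assms] by auto
qed

lemma strict_decrease_along:
  assumes "convex K" and pos: "\<forall>x\<in>K. 0 < dW x u"
    and "w \<in> K" "w - s *\<^sub>R u \<in> K" "s > 0"
  shows "W (w - s *\<^sub>R u) < W w"
proof -
  have "\<exists>d. ((\<lambda>\<sigma>. W (w - \<sigma> *\<^sub>R u)) has_real_derivative d) (at \<sigma>) \<and> d < 0"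
    if "0 \<le> \<sigma>" "\<sigma> \<le> s" for \<sigma>
  proof -
    define x where "x = w - \<sigma> *\<^sub>R u"
    have "x = (1 - \<sigma> / s) *\<^sub>R w + (\<sigma> / s) *\<^sub>R (w - s *\<^sub>R u)"
      using \<open>s > 0\<close> by (simp add: x_def algebra_simps)
    then have "x \<in> K"
      using that \<open>s > 0\<close> by (auto intro!: convexD[OF assms(1,3,4)])
    have "((\<lambda>\<sigma>. w - \<sigma> *\<^sub>R u) has_derivative (\<lambda>h. - (h *\<^sub>R u))) (at \<sigma>)"
      by (auto intro!: derivative_eq_intros)
    from has_derivative_compose[OF this has_derivative_W]
    have "((\<lambda>\<sigma>. W (w - \<sigma> *\<^sub>R u)) has_real_derivative - dW x u) (at \<sigma>)"
      unfolding has_field_derivative_def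
      by (rule has_derivative_eq_rhs)
         (use linear_dW[of x] in \<open>auto simp: x_def linear_neg linear_cmul fun_eq_iff\<close>)
    then show ?thesis
      using pos \<open>x \<in> K\<close> by auto
  qed
  from DERIV_neg_imp_decreasing[OF \<open>s > 0\<close> this] show ?thesis
    by simp
qed

lemma closed_segment_below_start:
  assumes "convex K" and pos: "\<forall>x\<in>K. 0 < dW x u"
    and "w \<in> K" "w - s *\<^sub>R u \<in> K" "s \<ge> 0"
  shows "closed_segment w (w - s *\<^sub>R u) \<subseteq> {x. W x \<le> W w}"
proof
  fix x
  assume "x \<in> closed_segment w (w - s *\<^sub>R u)"
  then obtain \<theta> where \<theta>: "0 \<le> \<theta>" "\<theta> \<le> 1" and x: "x = w - (\<theta> * s) *\<^sub>R u"
    unfolding in_segment by (auto simp: algebra_simps)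
  have "x \<in> K"
    using closed_segment_subset[OF assms(3,4,1)] \<open>x \<in> closed_segment w (w - s *\<^sub>R u)\<close> by blast
  show "x \<in> {x. W x \<le> W w}"
  proof (cases "\<theta> * s = 0")
    case False
    then have "\<theta> * s > 0"
      using \<theta> \<open>s \<ge> 0\<close> by simp
    then show ?thesis
      using strict_decrease_along[OF assms(1) pos \<open>w \<in> K\<close>] \<open>x \<in> K\<close> x by fastforce
  qed (auto simp: x)
qed

lemma uniform_descent_direction:
  assumes "z \<in> G" "z \<noteq> 0"
  obtains u \<rho> where "u \<noteq> 0" "\<rho> > 0" "\<forall>x\<in>ball z \<rho>. 0 < dW x u"
proof -
  obtain v where "dW z v < 0"
    using descent_direction assms by blast
  then have "0 < dW z (- v)"
    using linear_dW by (simp add: linear_neg)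
  moreover have "open {x. 0 < dW x (- v)}"
    by (rule open_Collect_less) (auto intro: continuous_dW)
  ultimately obtain \<rho> where "\<rho> > 0" "\<forall>x\<in>ball z \<rho>. 0 < dW x (- v)"
    by (force simp: open_contains_ball)
  moreover have "- v \<noteq> 0"
    using \<open>0 < dW z (- v)\<close> linear_0[OF linear_dW] by force
  ultimately show ?thesis
    using that by blast
qed

text \<open>Every point w of the ball below the level W z slides along the segment from w to
  w - \<tau> u, without rising, into a fixed ball around q = z - \<tau> u that lies below the level.\<close>

lemma strict_sublevel_locally_connected:
  assumes "z \<in> G" "z \<noteq> 0"
  obtains r M where "r > 0" "connected M" "M \<subseteq> {x. W x < W z}" "ball z r \<inter> {x. W x < W z} \<subseteq> M"
proof -
  obtain u \<rho> where "u \<noteq> 0" "\<rho> > 0" and pos: "\<forall>x\<in>ball z \<rho>. 0 < dW x u"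
    using uniform_descent_direction[OF assms] by blast
  define \<tau> where "\<tau> = \<rho> / (2 * norm u)"
  define q where "q = z - \<tau> *\<^sub>R u"
  have "\<tau> > 0" and dist_q: "dist z q = \<rho> / 2"
    using \<open>\<rho> > 0\<close> \<open>u \<noteq> 0\<close> by (auto simp: \<tau>_def q_def dist_norm)
  have "W q < W z"
    unfolding q_def
    by (rule strict_decrease_along[OF convex_ball pos])
       (use \<open>\<rho> > 0\<close> \<open>\<tau> > 0\<close> dist_q in \<open>auto simp: q_def\<close>)
  then obtain a where "a > 0" and q_ball: "ball q a \<subseteq> {x. W x < W z}"
    using open_strict_sublevel[of "W z"] by (force simp: open_contains_ball)
  define r where "r = min a (\<rho> / 2)"
  define B where "B = ball z r \<inter> {x. W x < W z}"
  define C where "C w = closed_segment w (w - \<tau> *\<^sub>R u) \<union> ball q r" for w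
  have C_connected: "connected (C w)" and C_below: "C w \<subseteq> {x. W x < W z}" if "w \<in> B" for w
  proof -
    have "dist z w < r"
      using that by (simp add: B_def)
    then have end_q: "w - \<tau> *\<^sub>R u \<in> ball q r"
      by (simp add: q_def dist_norm)
    then show "connected (C w)"
      unfolding C_def by (intro connected_Un) auto
    have "dist z (w - \<tau> *\<^sub>R u) \<le> dist z w + dist z q"
      using norm_triangle_ineq[of "z - w" "z - q"] by (simp add: dist_norm q_def algebra_simps)
    then have "w \<in> ball z \<rho>" "w - \<tau> *\<^sub>R u \<in> ball z \<rho>"
      using \<open>dist z w < r\<close> dist_q \<open>\<rho> > 0\<close> by (auto simp: r_def)
    then have "closed_segment w (w - \<tau> *\<^sub>R u) \<subseteq> {x. W x \<le> W w}"
      using closed_segment_below_start[OF convex_ball pos] \<open>\<tau> > 0\<close> by simp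
    moreover have "ball q r \<subseteq> ball q a"
      by (rule subset_ball) (simp add: r_def)
    ultimately show "C w \<subseteq> {x. W x < W z}"
      using that q_ball by (fastforce simp: C_def B_def)
  qed
  have "q \<in> \<Inter> (C ` B)"
    using \<open>a > 0\<close> \<open>\<rho> > 0\<close> by (simp add: C_def r_def)
  then have "connected (\<Union> (C ` B))"
    using C_connected by (intro connected_Union) auto
  moreover have "\<Union> (C ` B) \<subseteq> {x. W x < W z}"
    using C_below by blast
  moreover have "ball z r \<inter> {x. W x < W z} \<subseteq> \<Union> (C ` B)"
    by (force simp: B_def C_def)
  moreover have "r > 0"
    using \<open>a > 0\<close> \<open>\<rho> > 0\<close> by (simp add: r_def)
  ultimately show ?thesis
    using that by blast
qed

lemma connected_open_sublevel_domain:
  assumes "open \<Omega>" "bounded \<Omega>" "0 \<in> \<Omega>" "\<Omega> \<subseteq> G"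
    and frontier: "\<forall>x\<in>frontier \<Omega>. d \<le> W x" and below: "\<forall>x\<in>\<Omega>. W x < d"
  shows "connected \<Omega>"
proof (rule ccontr)
  assume "\<not> connected \<Omega>"
  then have "connected_component_set \<Omega> 0 \<noteq> \<Omega>"
    by (metis connected_connected_component)
  then obtain y where "y \<in> \<Omega>" "y \<notin> connected_component_set \<Omega> 0"
    using connected_component_subset by blast
  define D where "D = connected_component_set \<Omega> y"
  have "open D" "D \<subseteq> \<Omega>" "y \<in> D" "0 \<notin> D"
    using \<open>y \<in> \<Omega>\<close> \<open>y \<notin> connected_component_set \<Omega> 0\<close> open_connected_component[OF \<open>open \<Omega>\<close>]
    by (auto simp: D_def connected_component_subset connected_component_sym)
  have "compact (closure D)"
    using \<open>bounded \<Omega>\<close> \<open>D \<subseteq> \<Omega>\<close> bounded_subset compact_closure by blast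
  then obtain m where "m \<in> closure D" and min: "\<forall>x\<in>closure D. W m \<le> W x"
    using continuous_attains_inf[OF _ _ continuous_on_W] \<open>y \<in> D\<close> closure_subset by blast
  have "W m < d"
    using min below \<open>y \<in> D\<close> \<open>D \<subseteq> \<Omega>\<close> closure_subset by fastforce
  then have "m \<notin> frontier D"
    using frontier frontier_of_connected_component_subset[of \<Omega> y] by (force simp: D_def)
  then have "m \<in> D"
    using \<open>m \<in> closure D\<close> \<open>open D\<close> by (simp add: frontier_def interior_open)
  then have "m \<in> closure {x. W x < W m}"
    using \<open>D \<subseteq> \<Omega>\<close> \<open>\<Omega> \<subseteq> G\<close> \<open>0 \<notin> D\<close> by (intro mem_closure_strict_sublevel) auto
  then obtain x where "x \<in> D" "W x < W m"
    using \<open>m \<in> D\<close> open_Int_closure_eq_empty[OF \<open>open D\<close>, of "{x. W x < W m}"] by blast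
  then show False
    using min closure_subset by fastforce
qed

definition admissible_domain :: "real \<Rightarrow> 'a set \<Rightarrow> bool" where
  "admissible_domain c S \<longleftrightarrow> closed S \<and> connected S \<and> 0 \<in> interior S \<and>
     (\<forall>x\<in>interior S. W x < c) \<and> (\<forall>x\<in>frontier S. W x = c) \<and> compact S \<and> S \<subseteq> G"

lemma admissible_domain_le:
  assumes "admissible_domain c S" "x \<in> S"
  shows "W x \<le> c"
  using assms closure_subset[of S]
  by (cases "x \<in> interior S") (auto simp: admissible_domain_def frontier_def less_imp_le)

lemma admissible_domain_interiorI:
  assumes "admissible_domain c S" "x \<in> S" "W x < c"
  shows "x \<in> interior S"
  using assms closure_subset[of S] by (auto simp: admissible_domain_def frontier_def)

lemma connected_interior_admissible_domain:
  assumes "admissible_domain c S"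
  shows "connected (interior S)"
proof (rule connected_open_sublevel_domain[of _ c])
  show "bounded (interior S)"
    using assms compact_imp_bounded bounded_subset interior_subset
    unfolding admissible_domain_def by metis
  show "\<forall>x\<in>frontier (interior S). c \<le> W x"
    using assms frontier_interior_subset unfolding admissible_domain_def by fastforce
qed (use assms interior_subset[of S] in \<open>auto simp: admissible_domain_def\<close>)

lemma interior_admissible_domain_subset:
  assumes "admissible_domain c S1" "admissible_domain c S2"
  shows "interior S1 \<subseteq> interior S2"
proof (rule connected_sublevel_subset_interior[of S2 W c])
  show "connected (interior S1)"
    using assms(1) by (rule connected_interior_admissible_domain)
  show "interior S1 \<inter> S2 \<noteq> {}"
    using assms interior_subset[of S2] by (auto simp: admissible_domain_def)
qed (use assms in \<open>auto simp: admissible_domain_def\<close>)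

lemma admissible_domain_locally_closure_interior:
  assumes S: "admissible_domain c S" and z: "z \<in> closure (interior S) - interior S"
  obtains r where "r > 0" "ball z r \<inter> S \<subseteq> closure (interior S)"
proof -
  let ?O = "interior S"
  have "closure ?O \<subseteq> S"
    using S by (simp add: admissible_domain_def closure_minimal interior_subset)
  have on_level: "W x = c \<and> x \<in> G \<and> x \<noteq> 0" if "x \<in> S - ?O" for x
    using S that closure_subset[of S] by (auto simp: admissible_domain_def frontier_def)
  then obtain r M where "r > 0" "connected M" and M_below: "M \<subseteq> {x. W x < c}"
    and ball_M: "ball z r \<inter> {x. W x < c} \<subseteq> M"
    using strict_sublevel_locally_connected z \<open>closure ?O \<subseteq> S\<close> by (metis Diff_iff subsetD)
  have "ball z r \<inter> ?O \<noteq> {}"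
    using z \<open>r > 0\<close> open_Int_closure_eq_empty[OF open_ball] centre_in_ball by blast
  then have "M \<inter> S \<noteq> {}"
    using ball_M S interior_subset[of S] by (fastforce simp: admissible_domain_def)
  then have "M \<subseteq> ?O"
    using connected_sublevel_subset_interior[of S W c M] S \<open>connected M\<close> M_below
    by (auto simp: admissible_domain_def)
  have "h \<in> closure ?O" if "h \<in> ball z r" "h \<in> S - ?O" for h
  proof -
    have "h \<in> ball z r \<inter> closure {x. W x < c}"
      using on_level[OF \<open>h \<in> S - ?O\<close>] mem_closure_strict_sublevel \<open>h \<in> ball z r\<close> by fastforce
    also have "\<dots> \<subseteq> closure (ball z r \<inter> {x. W x < c})"
      by (rule open_Int_closure_subset) simp
    also have "\<dots> \<subseteq> closure ?O"
      using ball_M \<open>M \<subseteq> ?O\<close> by (intro closure_mono) blast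
    finally show ?thesis .
  qed
  then show ?thesis
    using that[OF \<open>r > 0\<close>] closure_subset[of ?O] by blast
qed

lemma closure_interior_admissible_domain:
  assumes S: "admissible_domain c S"
  shows "closure (interior S) = S"
proof
  let ?O = "interior S"
  have "closed S" "connected S" "0 \<in> ?O"
    using S by (auto simp: admissible_domain_def)
  then show "closure ?O \<subseteq> S"
    by (simp add: closure_minimal interior_subset)
  show "S \<subseteq> closure ?O"
  proof (rule ccontr)
    assume "\<not> S \<subseteq> closure ?O"
    define H where "H = S - closure ?O"
    have "S \<subseteq> closure ?O \<union> closure H" "closure ?O \<inter> S \<noteq> {}" "closure H \<inter> S \<noteq> {}"
      using \<open>\<not> S \<subseteq> closure ?O\<close> \<open>0 \<in> ?O\<close> closure_subset[of H] closure_subset[of ?O] interior_subset[of S]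
      by (auto simp: H_def)
    then obtain z where z: "z \<in> closure ?O" "z \<in> closure H"
      using connected_closedD[OF \<open>connected S\<close>, of "closure ?O" "closure H"] by auto
    have "?O \<inter> H = {}"
      using closure_subset[of ?O] by (auto simp: H_def)
    then have "z \<notin> ?O"
      using z(2) open_Int_closure_eq_empty[OF open_interior, of S H] by blast
    then obtain r where "r > 0" "ball z r \<inter> S \<subseteq> closure ?O"
      using admissible_domain_locally_closure_interior[OF S] z(1) by blast
    moreover obtain h where "h \<in> ball z r" "h \<in> H"
      using z(2) \<open>r > 0\<close> open_Int_closure_eq_empty[OF open_ball] centre_in_ball by blast
    ultimately show False
      by (auto simp: H_def)
  qed
qed

lemma admissible_domain_unique:
  assumes "admissible_domain c S1" "admissible_domain c S2"
  shows "S1 = S2"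
proof -
  have "interior S1 = interior S2"
    using interior_admissible_domain_subset assms by blast
  then show ?thesis
    using closure_interior_admissible_domain assms by metis
qed

lemma connected_interior_Int_sublevel:
  assumes S: "admissible_domain c S" and "W 0 < c'" "c' < c"
  shows "connected (interior S \<inter> {x. W x < c'})"
proof -
  define \<Omega> where "\<Omega> = interior S \<inter> {x. W x < c'}"
  have "open \<Omega>"
    by (simp add: \<Omega>_def open_Int open_strict_sublevel)
  have "\<Omega> \<subseteq> S"
    using interior_subset[of S] by (auto simp: \<Omega>_def)
  have "c' \<le> W x" if "x \<in> frontier \<Omega>" for x
  proof (rule ccontr)
    assume "\<not> c' \<le> W x"
    have "closure \<Omega> \<subseteq> S"
      using S \<open>\<Omega> \<subseteq> S\<close> by (intro closure_minimal) (auto simp: admissible_domain_def)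
    then have "x \<in> S"
      using that by (auto simp: frontier_def)
    then have "x \<in> \<Omega>"
      using admissible_domain_interiorI[OF S] \<open>\<not> c' \<le> W x\<close> \<open>c' < c\<close> by (simp add: \<Omega>_def)
    then show False
      using that \<open>open \<Omega>\<close> by (simp add: frontier_def interior_open)
  qed
  moreover have "bounded \<Omega>"
    using S \<open>\<Omega> \<subseteq> S\<close> compact_imp_bounded bounded_subset by (auto simp: admissible_domain_def)
  ultimately have "connected \<Omega>"
    using S \<open>open \<Omega>\<close> \<open>\<Omega> \<subseteq> S\<close> \<open>W 0 < c'\<close>
    by (intro connected_open_sublevel_domain[of \<Omega> c']) (auto simp: admissible_domain_def \<Omega>_def)
  then show ?thesis
    by (simp add: \<Omega>_def)
qed

lemma admissible_domain_mem_level: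
  assumes S: "admissible_domain c S" and S': "admissible_domain c' S'" and "y \<in> S" "W y = c'"
  shows "y \<in> S'"
proof (cases "c' = c")
  case True
  then show ?thesis
    using admissible_domain_unique S S' \<open>y \<in> S\<close> by blast
next
  case False
  then have "c' < c"
    using admissible_domain_le[OF S \<open>y \<in> S\<close>] \<open>W y = c'\<close> by simp
  have "W 0 < c'" "0 \<in> interior S'"
    using S' by (simp_all add: admissible_domain_def)
  define \<Omega> where "\<Omega> = interior S \<inter> {x. W x < c'}"
  have "0 \<in> \<Omega> \<inter> S'"
    using S \<open>W 0 < c'\<close> \<open>0 \<in> interior S'\<close> interior_subset[of S']
    by (auto simp: admissible_domain_def \<Omega>_def)
  then have "\<Omega> \<subseteq> interior S'"
    using S' connected_interior_Int_sublevel[OF S \<open>W 0 < c'\<close> \<open>c' < c\<close>]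
    by (intro connected_sublevel_subset_interior[of S' W c']) (auto simp: admissible_domain_def \<Omega>_def)
  have "y \<in> G" "y \<noteq> 0"
    using S \<open>y \<in> S\<close> \<open>W y = c'\<close> \<open>W 0 < c'\<close> by (auto simp: admissible_domain_def)
  then have "y \<in> interior S \<inter> closure {x. W x < c'}"
    using admissible_domain_interiorI[OF S \<open>y \<in> S\<close>] mem_closure_strict_sublevel \<open>W y = c'\<close> \<open>c' < c\<close>
    by auto
  also have "\<dots> \<subseteq> closure \<Omega>"
    unfolding \<Omega>_def by (rule open_Int_closure_subset[OF open_interior])
  also have "\<dots> \<subseteq> S'"
    using \<open>\<Omega> \<subseteq> interior S'\<close> S' interior_subset[of S']
    by (intro closure_minimal) (auto simp: admissible_domain_def)
  finally show ?thesis .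
qed

lemma radially_increasing:
  assumes S: "admissible_domain c S"
    and star: "\<forall>c'\<in>{0<..c}. \<exists>S'. admissible_domain c' S' \<and> (\<forall>x\<in>S'. \<forall>t\<in>{0..<1}. t *\<^sub>R x \<in> interior S')"
    and pos: "\<forall>y\<in>G - {0}. 0 < W y"
    and "x \<in> S" "x \<noteq> 0" "0 \<le> l1" "l1 < l2" "l2 \<le> 1"
  shows "W (l1 *\<^sub>R x) < W (l2 *\<^sub>R x)"
proof -
  have "\<forall>x\<in>G - {0}. x \<in> S \<longrightarrow> 0 < W x \<and> W x \<le> c"
    using pos admissible_domain_le[OF S] by blast
  then have level: "y \<in> S \<Longrightarrow> y \<noteq> 0 \<Longrightarrow> W y \<in> {0<..c}" for y
    using S by (auto simp: admissible_domain_def)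
  have star_S: "\<forall>x\<in>S. \<forall>t\<in>{0..<1}. t *\<^sub>R x \<in> interior S"
    using star level[OF \<open>x \<in> S\<close> \<open>x \<noteq> 0\<close>] admissible_domain_unique[OF S] by fastforce
  define y where "y = l2 *\<^sub>R x"
  have "y \<in> S"
  proof (cases "l2 = 1")
    case False
    then show ?thesis
      using star_S \<open>x \<in> S\<close> \<open>0 \<le> l1\<close> \<open>l1 < l2\<close> \<open>l2 \<le> 1\<close> interior_subset by (fastforce simp: y_def)
  qed (simp add: y_def \<open>x \<in> S\<close>)
  moreover have "y \<noteq> 0"
    using \<open>x \<noteq> 0\<close> \<open>0 \<le> l1\<close> \<open>l1 < l2\<close> by (simp add: y_def)
  ultimately obtain S' where S': "admissible_domain (W y) S'"
    and star_S': "\<forall>x\<in>S'. \<forall>t\<in>{0..<1}. t *\<^sub>R x \<in> interior S'"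
    using star level by blast
  have "y \<in> S'"
    using admissible_domain_mem_level[OF S S' \<open>y \<in> S\<close>] by simp
  then have "(l1 / l2) *\<^sub>R y \<in> interior S'"
    using star_S' \<open>0 \<le> l1\<close> \<open>l1 < l2\<close> by simp
  moreover have "(l1 / l2) *\<^sub>R y = l1 *\<^sub>R x"
    using \<open>0 \<le> l1\<close> \<open>l1 < l2\<close> by (simp add: y_def)
  ultimately have "l1 *\<^sub>R x \<in> interior S'"
    by (simp only:)
  moreover have "\<forall>x\<in>interior S'. W x < W y"
    using S' by (simp add: admissible_domain_def)
  ultimately show ?thesis
    by (simp add: y_def)
qed

end

theorem theorem2p6:
  fixes f :: "real^'n \<Rightarrow> real^'n" and A :: "real^'n^'n"
    and V :: "real^'n \<Rightarrow> real" and U :: "(real^'n) set" and p :: nat and c :: real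
  assumes f_an: "real_analytic_on f UNIV" and f0: "f 0 = 0"
    and A_def: "(f has_derivative (\<lambda>h. A *v h)) (at 0)"
    and A_stable: "\<forall>\<mu>. cplx_eigenvalue A \<mu> \<longrightarrow> Re \<mu> < 0"
    and U: "open U" "0 \<in> U"
    and V_an: "real_analytic_on V U" and V0: "V 0 = 0"
    and V_eq: "\<forall>x\<in>U. V differentiable (at x) \<and> frechet_derivative V (at x) (f x) = - ((norm x)\<^sup>2)"
    and p: "p \<ge> 2" and c: "c > 0"
    and N_exists: "\<exists>S. admissible f V p c S"
    and star: "\<forall>c'\<in>{0<..c}. (\<exists>S. admissible f V p c' S) \<and> star_prop (Nset f V p c')"
  shows "\<forall>x\<in>Nset f V p c - {0}. \<forall>l1 l2. 0 \<le> l1 \<and> l1 < l2 \<and> l2 \<le> 1 \<longrightarrow>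
           taylor_poly V p (l1 *\<^sub>R x) < taylor_poly V p (l2 *\<^sub>R x)"
proof -
  obtain dW where W_deriv: "\<And>x. (taylor_poly V p has_derivative dW x) (at x)"
    and dW_cont: "\<And>v. continuous_on UNIV (\<lambda>x. dW x v)"
    using taylor_poly_continuously_differentiable[OF V_an U(2)] by blast
  have Gp_props: "0 < taylor_poly V p y \<and> orbital_deriv f (taylor_poly V p) y < 0"
    if "y \<in> Gp f V p" "y \<noteq> 0" for y
    using that unfolding Gp_def by blast
  interpret C1_noncritical "taylor_poly V p" dW "Gp f V p"
  proof
    show "\<exists>v. dW y v < 0" if "y \<in> Gp f V p" "y \<noteq> 0" for y
      using Gp_props[OF that] frechet_derivative_at[OF W_deriv]
      by (intro exI[of _ "f y"]) (simp add: orbital_deriv_def)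
  qed (fact W_deriv dW_cont)+
  have admissible_iff: "admissible f V p c' S \<longleftrightarrow> admissible_domain c' S" for c' S
    unfolding admissible_def admissible_domain_def ..
  have Nset_eq: "Nset f V p c' = S" if "admissible_domain c' S" for c' S
    unfolding Nset_def admissible_iff
    by (rule the_equality) (use that admissible_domain_unique in blast)+
  obtain S where S: "admissible_domain c S"
    using N_exists admissible_iff by blast
  have levels: "\<forall>c'\<in>{0<..c}. \<exists>S'. admissible_domain c' S' \<and> (\<forall>x\<in>S'. \<forall>t\<in>{0..<1}. t *\<^sub>R x \<in> interior S')"
  proof
    fix c'
    assume "c' \<in> {0<..c}"
    then obtain S' where S': "admissible_domain c' S'" and "star_prop (Nset f V p c')"
      using star admissible_iff by blast
    then show "\<exists>S'. admissible_domain c' S' \<and> (\<forall>x\<in>S'. \<forall>t\<in>{0..<1}. t *\<^sub>R x \<in> interior S')"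
      unfolding Nset_eq[OF S'] star_prop_def by blast
  qed
  have "\<forall>y\<in>Gp f V p - {0}. 0 < taylor_poly V p y"
    using Gp_props by blast
  from radially_increasing[OF S levels this] show ?thesis
    unfolding Nset_eq[OF S] by blast
qed

end
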